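(* Let $p$ be a positive integer and $q$ a positive even integer with $p/q\in[2.5,3)$. Then there exists a fractional clique $x$ of the Kneser graph $K_{p/q}$ of weight $p/q$ such that $x(v)=\binom{p-q}{q}^{-1}$ for every neighbor $v$ of the vertex $[q]=\{1,\dots,q\}$.
   Context: For integers $1\le q\le p$, the Kneser graph $K_{p/q}$ has as vertices all $q$-element subsets of $[p]=\{1,\dots,p\}$, two being adjacent iff they are disjoint. A fractional clique of a graph $G$ is a map $x:V(G)\to[0,1]$ such that $\sum_{v\in I}x(v)\le 1$ for every independent set $I$ of $G$; its weight is $\sum_{v\in V(G)}x(v)$. *)

theory Defs
  imports Complex_Main
begin

definition kneser_vertices :: "nat \<Rightarrow> nat \<Rightarrow> nat set set" where
  "kneser_vertices p q = {S. S \<subseteq> {1..p} \<and> card S = q}"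

definition kneser_adj :: "nat set \<Rightarrow> nat set \<Rightarrow> bool" where
  "kneser_adj S T \<longleftrightarrow> S \<inter> T = {}"

definition kneser_independent :: "nat \<Rightarrow> nat \<Rightarrow> nat set set \<Rightarrow> bool" where
  "kneser_independent p q I \<longleftrightarrow> I \<subseteq> kneser_vertices p q \<and>
     (\<forall>S\<in>I. \<forall>T\<in>I. S \<noteq> T \<longrightarrow> \<not> kneser_adj S T)"

definition kneser_fractional_clique :: "nat \<Rightarrow> nat \<Rightarrow> (nat set \<Rightarrow> real) \<Rightarrow> bool" where
  "kneser_fractional_clique p q x \<longleftrightarrow>
     (\<forall>v\<in>kneser_vertices p q. 0 \<le> x v \<and> x v \<le> 1) \<and>
     (\<forall>I. kneser_independent p q I \<longrightarrow> sum x I \<le> 1)"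

definition fc_weight :: "nat \<Rightarrow> nat \<Rightarrow> (nat set \<Rightarrow> real) \<Rightarrow> real" where
  "fc_weight p q x = sum x (kneser_vertices p q)"

end

theory Submission
  imports Defs "HOL-Combinatorics.Permutations"
begin

text \<open>
  Split {1..p} into the head {1..q} = Head1 \<union> Head2 (halves of size s) and the tail
  {q+1..p} of size r = p - q; put d = 3q - p, so that 1 \<le> d \<le> s and r + d = 4s.  Fix a
  cyclic ordering of the tail.  It supports weight 1/r on each of the r q-arcs of the tail,
  weight c = (q - d)/(qr) on each vertex Head1 \<union> (s-arc) and Head2 \<union> (s-arc), and weight
  d/q on the head; the total is p/q.  That an intersecting family of vertices gets weight at
  most 1 reduces to a counting statement about arcs on an r-cycle (arc_configuration_bound),
  which rests on Katona's cycle lemma, a cross-intersection bound and a Cauchy-Davenport type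
  bound for cyclic sumsets with an interval.  Averaging over all orderings of the tail keeps
  these properties and, by symmetry under permutations of the tail, makes the weight constant
  on the neighbours of the head; since each ordering gives them total weight 1, each gets
  1 / (r choose q).
\<close>

section \<open>Arcs on a cycle\<close>

text \<open>The residues {..<r} are read as the vertices of an r-cycle;
  cyc_arc r i l is the arc of l consecutive vertices starting at i.\<close>

definition cyc_arc :: "nat \<Rightarrow> nat \<Rightarrow> nat \<Rightarrow> nat set" where
  "cyc_arc r i l = (\<lambda>t. (i + t) mod r) ` {..<l}"

lemma mod_add_cancel_lt:
  fixes r i a b :: nat
  assumes "a < r" "b < r" "(i + a) mod r = (i + b) mod r"
  shows "a = b"
proof (cases "a \<le> b")
  case True
  then obtain k where "i + b = i + a + r * k"
    using assms(3) mod_eq_nat2E by (metis add_le_mono1 add.commute)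
  hence "b = a + r * k" by simp
  with assms show ?thesis by (cases k) auto
next
  case False
  then obtain k where "i + a = i + b + r * k"
    using assms(3) mod_eq_nat1E by (metis add_le_cancel_left nat_le_linear)
  hence "a = b + r * k" by simp
  with assms show ?thesis by (cases k) auto
qed

lemma inj_on_mod_shift:
  fixes X :: "nat set"
  assumes "X \<subseteq> {..<r}"
  shows "inj_on (\<lambda>x. (x + c) mod r) X"
proof (rule inj_onI)
  fix x y assume "x \<in> X" "y \<in> X" "(x + c) mod r = (y + c) mod r"
  thus "x = y" using assms mod_add_cancel_lt[of x r y c] by (auto simp: add.commute)
qed

lemma cyc_arc_subset: "r > 0 \<Longrightarrow> cyc_arc r i l \<subseteq> {..<r}"
  unfolding cyc_arc_def by auto

lemma card_cyc_arc:
  assumes "l \<le> r"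
  shows "card (cyc_arc r i l) = l"
proof -
  have "inj_on (\<lambda>t. (i + t) mod r) {..<l}"
    using inj_on_mod_shift[of "{..<l}" r i] assms by (simp add: add.commute)
  thus ?thesis unfolding cyc_arc_def by (simp add: card_image)
qed

lemma cyc_arcs_disjoint:
  assumes "l1 \<le> m" "m + l2 \<le> r"
  shows "cyc_arc r z l1 \<inter> cyc_arc r ((z + m) mod r) l2 = {}"
proof (rule ccontr)
  assume "cyc_arc r z l1 \<inter> cyc_arc r ((z + m) mod r) l2 \<noteq> {}"
  then obtain t t' where t: "t < l1" "t' < l2"
    and eq: "(z + t) mod r = ((z + m) mod r + t') mod r"
    unfolding cyc_arc_def by auto
  have "((z + m) mod r + t') mod r = (z + (m + t')) mod r"
    by (simp add: mod_add_left_eq add.assoc)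
  with eq have "(z + t) mod r = (z + (m + t')) mod r" by simp
  moreover have "t < r" "m + t' < r" using t assms by auto
  ultimately have "t = m + t'" using mod_add_cancel_lt by blast
  thus False using t assms by auto
qed

text \<open>Cross-intersecting families of s-arcs: if every arc starting in X meets
  every arc starting in Y, then |X| + |Y| \<le> r, because the arc starting
  s steps after a member of X cannot start in Y.\<close>

lemma cross_intersecting_arcs_card:
  assumes X: "X \<subseteq> {..<r}" and Y: "Y \<subseteq> {..<r}" and "2 * s \<le> r"
    and meet: "\<forall>x\<in>X. \<forall>y\<in>Y. cyc_arc r x s \<inter> cyc_arc r y s \<noteq> {}"
  shows "card X + card Y \<le> r"
proof -
  let ?g = "\<lambda>x. (x + s) mod r"
  have "?g ` X \<inter> Y = {}"
  proof (rule ccontr)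
    assume "?g ` X \<inter> Y \<noteq> {}"
    then obtain x where x: "x \<in> X" "?g x \<in> Y" by auto
    have "cyc_arc r x s \<inter> cyc_arc r ((x + s) mod r) s = {}"
      by (rule cyc_arcs_disjoint) (use assms in auto)
    with meet x show False by auto
  qed
  moreover have gX: "?g ` X \<subseteq> {..<r}" using X by fastforce
  ultimately have "card (?g ` X \<union> Y) = card X + card Y"
    using Y card_image[OF inj_on_mod_shift[OF X]]
    by (subst card_Un_disjoint) (auto intro: finite_subset)
  moreover have "card (?g ` X \<union> Y) \<le> r"
    using gX Y card_mono[of "{..<r}" "?g ` X \<union> Y"] by auto
  ultimately show ?thesis by simp
qed

definition cyc_offset :: "nat \<Rightarrow> nat \<Rightarrow> nat \<Rightarrow> nat" where
  "cyc_offset r t0 t = (t + (r - t0)) mod r"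

lemma cyc_offset:
  assumes "t0 < r" "t < r"
  shows "cyc_offset r t0 t < r" "(t0 + cyc_offset r t0 t) mod r = t"
proof -
  show "cyc_offset r t0 t < r" unfolding cyc_offset_def using assms by simp
  have "(t0 + cyc_offset r t0 t) mod r = (t0 + (t + (r - t0))) mod r"
    unfolding cyc_offset_def by (simp add: mod_add_right_eq)
  also have "t0 + (t + (r - t0)) = t + r" using assms by simp
  finally show "(t0 + cyc_offset r t0 t) mod r = t" using assms by simp
qed

lemma meeting_arc_offset:
  assumes "t0 < r" "t < r" "cyc_arc r t0 s \<inter> cyc_arc r t s \<noteq> {}"
  shows "cyc_offset r t0 t < s \<or> r - s < cyc_offset r t0 t"
proof (rule ccontr)
  assume "\<not> ?thesis"
  hence "s \<le> cyc_offset r t0 t" "cyc_offset r t0 t + s \<le> r" by auto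
  hence "cyc_arc r t0 s \<inter> cyc_arc r ((t0 + cyc_offset r t0 t) mod r) s = {}"
    by (rule cyc_arcs_disjoint)
  with assms cyc_offset show False by simp
qed

lemma opposite_offsets_disjoint:
  assumes "t0 < r" "a < r" "b < r" "2 * s \<le> r"
    and "cyc_offset r t0 b = cyc_offset r t0 a + (r - s)"
  shows "cyc_arc r b s \<inter> cyc_arc r a s = {}"
proof -
  have "(b + s) mod r = ((t0 + cyc_offset r t0 b) mod r + s) mod r"
    using cyc_offset(2)[OF assms(1,3)] by simp
  also have "\<dots> = (t0 + cyc_offset r t0 b + s) mod r" by (simp add: mod_add_left_eq)
  also have "t0 + cyc_offset r t0 b + s = (t0 + cyc_offset r t0 a) + r" using assms(4,5) by simp
  also have "(t0 + cyc_offset r t0 a + r) mod r = a" using cyc_offset(2)[OF assms(1,2)] by simp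
  finally have "a = (b + s) mod r" by simp
  thus ?thesis using cyc_arcs_disjoint[of s s s r b] assms(4) by simp
qed

text \<open>Relative to a fixed member, the offsets
  of the members lie in [0, s) \<union> (r - s, r), and folding the second interval onto
  the first is injective, since offsets k and k + r - s belong to disjoint arcs.\<close>

lemma intersecting_arcs_card:
  assumes T: "T \<subseteq> {..<r}" and s2r: "2 * s \<le> r"
    and meet: "\<forall>x\<in>T. \<forall>y\<in>T. cyc_arc r x s \<inter> cyc_arc r y s \<noteq> {}"
  shows "card T \<le> s"
proof (cases "T = {}")
  case False
  then obtain t0 where t0: "t0 \<in> T" by auto
  have t0r: "t0 < r" using t0 T by auto
  let ?m = "cyc_offset r t0"
  have range: "?m t < s \<or> r - s < ?m t" if "t \<in> T" for t
    using meeting_arc_offset[OF t0r _ meet[rule_format, OF t0 that]] that T by auto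
  define h where "h = (\<lambda>t. if ?m t < s then ?m t else ?m t + s - r)"
  have "inj_on h T"
  proof (rule inj_onI)
    fix a b assume a: "a \<in> T" and b: "b \<in> T" and hab: "h a = h b"
    have ar: "a < r" and br: "b < r" using a b T by auto
    have not_opposite: "?m b \<noteq> ?m a + (r - s)" if "a \<in> T" "b \<in> T" "a < r" "b < r" for a b
    proof
      assume "?m b = ?m a + (r - s)"
      hence "cyc_arc r b s \<inter> cyc_arc r a s = {}"
        by (rule opposite_offsets_disjoint[OF t0r that(3,4) s2r])
      thus False using meet that(1,2) by auto
    qed
    have "?m a = ?m b"
      using hab range[OF a] range[OF b] not_opposite[OF a b ar br] not_opposite[OF b a br ar]
        cyc_offset(1)[OF t0r ar] cyc_offset(1)[OF t0r br] s2r
      unfolding h_def by (auto split: if_splits)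
    thus "a = b" using cyc_offset(2)[OF t0r ar] cyc_offset(2)[OF t0r br] by metis
  qed
  moreover have "h ` T \<subseteq> {..<s}" using range cyc_offset(1)[OF t0r] T unfolding h_def by fastforce
  ultimately show ?thesis using card_mono[of "{..<s}" "h ` T"] card_image by fastforce
qed simp

lemma successor_closed_eq_cycle:
  fixes S :: "nat set"
  assumes S: "S \<subseteq> {..<r}" and "w0 \<in> S" and closed: "\<forall>w\<in>S. (w + 1) mod r \<in> S"
  shows "S = {..<r}"
proof -
  have reach: "(w0 + n) mod r \<in> S" for n
  proof (induction n)
    case 0 thus ?case using assms by auto
  next
    case (Suc n)
    have "((w0 + n) mod r + 1) mod r \<in> S" using closed Suc by blast
    thus ?case using mod_add_left_eq[of "w0 + n" r 1] by simp
  qed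
  have "w0 < r" using assms by auto
  hence "y \<in> S" if "y < r" for y
    using reach[of "y + r - w0"] that by simp
  thus ?thesis using S by auto
qed

definition cyc_sumset :: "nat \<Rightarrow> nat set \<Rightarrow> nat \<Rightarrow> nat \<Rightarrow> nat set" where
  "cyc_sumset r Z a k = (\<lambda>(z, m). (z + m) mod r) ` (Z \<times> {a..a + k})"

lemma cyc_sumset_subset: "r > 0 \<Longrightarrow> cyc_sumset r Z a k \<subseteq> {..<r}"
  unfolding cyc_sumset_def by auto

lemma cyc_sumset_successor:
  assumes "w \<in> cyc_sumset r Z a k"
  shows "(w + 1) mod r \<in> cyc_sumset r Z a (Suc k)"
proof -
  from assms obtain z m where zm: "z \<in> Z" "m \<in> {a..a + k}" "w = (z + m) mod r"
    unfolding cyc_sumset_def by auto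
  have "(w + 1) mod r = (z + (m + 1)) mod r" by (simp only: zm(3) mod_add_left_eq add.assoc)
  moreover have "(z, m + 1) \<in> Z \<times> {a..a + Suc k}" using zm by auto
  ultimately show ?thesis unfolding cyc_sumset_def by (metis (no_types, lifting) case_prod_conv image_eqI)
qed

text \<open>Each extra step adds a new element unless the
  sumset is already closed under the successor map, i.e. is everything.\<close>

lemma card_cyc_sumset:
  assumes Z: "Z \<subseteq> {..<r}" "Z \<noteq> {}"
  shows "min r (card Z + k) \<le> card (cyc_sumset r Z a k)"
proof (induction k)
  case 0
  have "cyc_sumset r Z a 0 = (\<lambda>z. (z + a) mod r) ` Z" unfolding cyc_sumset_def by (auto simp: image_iff)
  thus ?case using card_image[OF inj_on_mod_shift[OF Z(1)]] by simp
next
  case (Suc k)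
  let ?W = "cyc_sumset r Z a"
  have r0: "r > 0" using Z by auto
  have fin: "finite (?W k')" for k' using finite_subset[OF cyc_sumset_subset[OF r0]] by blast
  have mono: "?W k \<subseteq> ?W (Suc k)" unfolding cyc_sumset_def by auto
  show ?case
  proof (cases "card (?W k) < r")
    case False
    thus ?thesis using card_mono[OF fin mono] by simp
  next
    case True
    hence "?W k \<noteq> {..<r}" by (metis card_lessThan less_irrefl)
    moreover have "?W k \<noteq> {}" unfolding cyc_sumset_def using Z by auto
    ultimately have "\<not> (\<forall>w\<in>?W k. (w + 1) mod r \<in> ?W k)"
      using successor_closed_eq_cycle[OF cyc_sumset_subset[OF r0]] by blast
    then obtain w where w: "w \<in> ?W k" "(w + 1) mod r \<notin> ?W k" by blast
    have "insert ((w + 1) mod r) (?W k) \<subseteq> ?W (Suc k)"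
      using mono cyc_sumset_successor[OF w(1)] by auto
    hence "card (insert ((w + 1) mod r) (?W k)) \<le> card (?W (Suc k))"
      by (intro card_mono[OF fin])
    hence "Suc (card (?W k)) \<le> card (?W (Suc k))" using fin w(2) by simp
    thus ?thesis using Suc.IH by simp
  qed
qed

text \<open>If every l-arc starting in U meets every s-arc starting in the nonempty set Z, and
  s + k + l \<le> r, then U avoids the sumset Z + [s, s + k], because an arc starting s to s + k
  steps after an s-arc is disjoint from it.\<close>

lemma arcs_meeting_all_arcs_card:
  assumes U: "U \<subseteq> {..<r}" and Z: "Z \<subseteq> {..<r}" "Z \<noteq> {}" and len: "s + k + l \<le> r"
    and meet: "\<forall>j\<in>U. \<forall>z\<in>Z. cyc_arc r j l \<inter> cyc_arc r z s \<noteq> {}"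
  shows "card U + min r (card Z + k) \<le> r"
proof -
  let ?W = "cyc_sumset r Z s k"
  have r0: "r > 0" using Z by auto
  have "U \<inter> ?W = {}"
  proof (rule ccontr)
    assume "U \<inter> ?W \<noteq> {}"
    then obtain z m where j: "(z + m) mod r \<in> U" and zm: "z \<in> Z" "s \<le> m" "m \<le> s + k"
      unfolding cyc_sumset_def by auto
    have "cyc_arc r z s \<inter> cyc_arc r ((z + m) mod r) l = {}"
      by (rule cyc_arcs_disjoint) (use zm len in auto)
    with meet j zm(1) show False by blast
  qed
  moreover have "finite U" "finite ?W"
    using U cyc_sumset_subset[OF r0] finite_subset[OF _ finite_lessThan] by blast+
  ultimately have "card (U \<union> ?W) = card U + card ?W" by (simp add: card_Un_disjoint)
  moreover have "card (U \<union> ?W) \<le> r"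
    using card_mono[of "{..<r}" "U \<union> ?W"] U cyc_sumset_subset[OF r0] by auto
  ultimately have "card U + card ?W \<le> r" by simp
  thus ?thesis using card_cyc_sumset[OF Z, of k s] by linarith
qed

lemma weighted_count_bound:
  fixes u x y z t r s d :: nat
  assumes rd: "r + d = 4 * s" and ds: "d \<le> s" and u: "u + min r (z + (s - d)) \<le> r"
    and xy: "x + y \<le> r" "x + y = z + t" and t: "t \<le> s" "t \<le> z"
  shows "2 * s * u + (2 * s - d) * (x + y) \<le> 2 * s * r"
proof (cases "r \<le> z + (s - d)")
  case True
  hence "u = 0" using u by simp
  moreover have "(2 * s - d) * (x + y) \<le> 2 * s * r" using xy(1) by (simp add: mult_le_mono)
  ultimately show ?thesis by simp
next
  case False
  hence ub: "u + z + (s - d) \<le> r" using u by simp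
  define S D U Zi T R where "S = int s" "D = int d" "U = int u" "Zi = int z" "T = int t" "R = int r"
  have h: "R + D = 4 * S" "D \<le> S" "U + Zi + (S - D) \<le> R" "T \<le> S" "T \<le> Zi" "0 \<le> U" "0 \<le> S" "0 \<le> D"
    using rd ds ub t unfolding S_D_U_Zi_T_R_def by auto
  have a: "2 * S * U \<le> 2 * S * (R - Zi - (S - D))" using h by (intro mult_left_mono) auto
  have b: "(2 * S - D) * (Zi + T) \<le> 2 * S * (Zi + S - D)"
  proof (cases "Zi \<le> S")
    case True
    have "(2 * S - D) * (Zi + T) \<le> (2 * S - D) * (Zi + Zi)" using h by (intro mult_left_mono) auto
    moreover have "(S - D) * Zi \<le> (S - D) * S" using h True by (intro mult_left_mono) auto
    ultimately show ?thesis by (simp add: algebra_simps)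
  next
    case False
    have "(2 * S - D) * (Zi + T) \<le> (2 * S - D) * (Zi + S)" using h by (intro mult_left_mono) auto
    moreover have "D * S \<le> D * Zi" using h False by (intro mult_left_mono) auto
    ultimately show ?thesis by (simp add: algebra_simps)
  qed
  have "int (2 * s * u + (2 * s - d) * (x + y)) = 2 * S * U + (2 * S - D) * (Zi + T)"
    using ds xy(2) unfolding S_D_U_Zi_T_R_def by (simp add: of_nat_diff)
  also have "\<dots> \<le> 2 * S * R" using a b by (simp add: algebra_simps)
  also have "\<dots> = int (2 * s * r)" unfolding S_D_U_Zi_T_R_def by simp
  finally show ?thesis by (simp only: of_nat_le_iff)
qed

text \<open>Writing Z = X \<union> Y, the
  set X \<inter> Y is intersecting (Katona), X and Y are cross-intersecting, and U is controlled
  by the sumset bound.\<close>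

lemma arc_configuration_bound:
  assumes U: "U \<subseteq> {..<r}" and X: "X \<subseteq> {..<r}" and Y: "Y \<subseteq> {..<r}"
    and rd: "r + d = 4 * s" and ds: "d \<le> s"
    and cross: "\<forall>x\<in>X. \<forall>y\<in>Y. cyc_arc r x s \<inter> cyc_arc r y s \<noteq> {}"
    and long: "\<forall>j\<in>U. \<forall>z\<in>X \<union> Y. cyc_arc r j (2 * s) \<inter> cyc_arc r z s \<noteq> {}"
  shows "2 * s * card U + (2 * s - d) * (card X + card Y) \<le> 2 * s * r"
proof (cases "X \<union> Y = {}")
  case True
  thus ?thesis using card_mono[OF _ U] by simp
next
  case False
  have s2r: "2 * s \<le> r" using rd ds by linarith
  have finX: "finite X" and finY: "finite Y" using X Y by (auto intro: finite_subset)
  have "card U + min r (card (X \<union> Y) + (s - d)) \<le> r"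
    by (rule arcs_meeting_all_arcs_card[OF U _ False _ long]) (use X Y rd ds in auto)
  moreover have "card X + card Y \<le> r" by (rule cross_intersecting_arcs_card[OF X Y s2r cross])
  moreover have "card X + card Y = card (X \<union> Y) + card (X \<inter> Y)"
    using card_Un_Int[OF finX finY] .
  moreover have "card (X \<inter> Y) \<le> s"
    by (rule intersecting_arcs_card[of _ r]) (use X cross s2r in auto)
  moreover have "card (X \<inter> Y) \<le> card (X \<union> Y)" using finX finY by (intro card_mono) auto
  ultimately show ?thesis by (rule weighted_count_bound[OF rd ds])
qed

text \<open>Two equally large subsets of a finite set R are exchanged by a permutation of R; this
  is the symmetry making the final weights constant on the neighbours of the head.\<close>

lemma exists_permutation_mapping:
  assumes R: "finite R" and v: "v \<subseteq> R" and w: "w \<subseteq> R" and c: "card v = card w"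
  shows "\<exists>\<pi>. \<pi> permutes R \<and> \<pi> ` v = w"
proof -
  have fv: "finite v" "finite w" using v w R finite_subset by auto
  obtain f1 where f1: "bij_betw f1 v w" using finite_same_card_bij[OF fv c] by auto
  have "card (R - v) = card (R - w)" using c v w R by (simp add: card_Diff_subset fv)
  then obtain f2 where f2: "bij_betw f2 (R - v) (R - w)"
    using finite_same_card_bij[of "R - v" "R - w"] R by auto
  define g where "g = (\<lambda>y. if y \<in> v then f1 y else f2 y)"
  have g1: "bij_betw g v w" using f1 unfolding g_def by (rule bij_betw_cong[THEN iffD1, rotated]) auto
  have "bij_betw g (R - v) (R - w)" using f2 unfolding g_def
    by (rule bij_betw_cong[THEN iffD1, rotated]) auto
  hence "bij_betw g (v \<union> (R - v)) (w \<union> (R - w))" by (intro bij_betw_combine[OF g1]) auto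
  moreover have "v \<union> (R - v) = R" "w \<union> (R - w) = R" using v w by auto
  ultimately have "restrict_id g R permutes R" by (intro permutes_restrict_id) simp
  moreover have "restrict_id g R ` v = g ` v" using v by (intro image_cong) auto
  moreover have "g ` v = w" using g1 by (rule bij_betw_imp_surj_on)
  ultimately show ?thesis by blast
qed

lemma permutes_image_outside:
  assumes "\<pi> permutes R" "B \<inter> R = {}"
  shows "\<pi> ` B = B"
proof -
  have "\<forall>y\<in>B. \<pi> y = y" using assms permutes_not_in by fastforce
  thus ?thesis by (simp add: image_cong)
qed

section \<open>The construction\<close>

locale kneser_window =
  fixes p q :: nat
  assumes q_pos: "q > 0" and q_even: "even q"
    and ratio_lower: "5 * q \<le> 2 * p" and ratio_upper: "p < 3 * q"
begin

definition s :: nat where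
  "s = q div 2"
definition r :: nat where
  "r = p - q"
definition d :: nat where
  "d = 3 * q - p"
definition Head :: "nat set" where
  "Head = {1..q}"
definition Head1 :: "nat set" where
  "Head1 = {1..s}"
definition Head2 :: "nat set" where
  "Head2 = {s + 1..q}"
definition Tail :: "nat set" where
  "Tail = {q + 1..p}"

abbreviation "V \<equiv> kneser_vertices p q"

lemma parameters:
  shows q_eq: "q = 2 * s" and s_pos: "s \<ge> 1" and r_plus_d: "r + d = 4 * s"
    and d_le_s: "d \<le> s" and p_eq: "p = q + r" and q_le_r: "q \<le> r"
proof -
  obtain k where k: "q = 2 * k" using q_even by (auto elim: evenE)
  hence sk: "s = k" unfolding s_def by simp
  show "q = 2 * s" using k sk by simp
  show "s \<ge> 1" using k sk q_pos by simp
  show "r + d = 4 * s" using k sk ratio_lower ratio_upper unfolding r_def d_def by linarith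
  show "d \<le> s" using k sk ratio_lower unfolding d_def by linarith
  show "p = q + r" using ratio_upper ratio_lower unfolding r_def by linarith
  show "q \<le> r" using ratio_lower unfolding r_def by linarith
qed

lemma r_pos: "r > 0" using q_le_r q_pos by linarith

lemma card_Tail: "card Tail = r" unfolding Tail_def r_def by simp

lemma ground_sets:
  shows Tail_Head_disjoint: "Tail \<inter> Head = {}"
    and Head1_sub: "Head1 \<subseteq> Head" and Head2_sub: "Head2 \<subseteq> Head"
    and Head_sub: "Head \<subseteq> {1..p}" and Tail_sub: "Tail \<subseteq> {1..p}"
    and one_in: "1 \<in> Head1" "1 \<notin> Head2" and s1_in: "s + 1 \<in> Head2"
  using q_eq s_pos p_eq unfolding Tail_def Head_def Head1_def Head2_def by auto

lemma card_Head_parts: "card Head1 = s" "card Head2 = s" "card Head = q"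
  using q_eq unfolding Head1_def Head2_def Head_def by auto

text \<open>Cyclic orderings of the tail, represented as lists enumerating it.\<close>

definition orderings :: "nat list set" where
  "orderings = {xs. set xs = Tail \<and> distinct xs}"

lemma orderings_props:
  assumes "xs \<in> orderings"
  shows length_ordering: "length xs = r" and nth_ordering: "\<And>k. k < r \<Longrightarrow> xs ! k \<in> Tail"
    and inj_nth_ordering: "inj_on (nth xs) {..<r}"
proof -
  have h: "set xs = Tail" "distinct xs" using assms unfolding orderings_def by auto
  show l: "length xs = r" using distinct_card[OF h(2)] h(1) card_Tail by simp
  show "\<And>k. k < r \<Longrightarrow> xs ! k \<in> Tail"
  proof -
    fix k assume "k < r"
    hence "xs ! k \<in> set xs" using l by simp
    thus "xs ! k \<in> Tail" using h(1) by simp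
  qed
  show "inj_on (nth xs) {..<r}" using inj_on_nth[OF h(2), of "{..<r}"] l by simp
qed

lemma finite_orderings: "finite orderings"
proof -
  have "orderings \<subseteq> {xs. set xs \<subseteq> Tail \<and> length xs = r}"
    using length_ordering unfolding orderings_def by auto
  moreover have "finite {xs. set xs \<subseteq> Tail \<and> length xs = r}"
    by (rule finite_lists_length_eq) (simp add: Tail_def)
  ultimately show ?thesis by (rule finite_subset)
qed

lemma card_orderings_pos: "real (card orderings) > 0"
proof -
  have "orderings \<noteq> {}"
    using finite_distinct_list[of Tail] unfolding orderings_def Tail_def by auto
  thus ?thesis using finite_orderings by (simp add: card_gt_0_iff)
qed

definition tail_arc :: "nat list \<Rightarrow> nat \<Rightarrow> nat \<Rightarrow> nat set" where
  "tail_arc xs i l = nth xs ` cyc_arc r i l"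

lemma tail_arc_sub: "xs \<in> orderings \<Longrightarrow> tail_arc xs i l \<subseteq> Tail"
  using nth_ordering cyc_arc_subset[OF r_pos] unfolding tail_arc_def by blast

lemma card_tail_arc: "xs \<in> orderings \<Longrightarrow> l \<le> r \<Longrightarrow> card (tail_arc xs i l) = l"
  unfolding tail_arc_def
  using inj_nth_ordering cyc_arc_subset[OF r_pos] card_cyc_arc by (metis card_image inj_on_subset)

lemma tail_arcs_meet:
  assumes xs: "xs \<in> orderings" and "tail_arc xs i l \<inter> tail_arc xs j l' \<noteq> {}"
  shows "cyc_arc r i l \<inter> cyc_arc r j l' \<noteq> {}"
proof -
  obtain a b where ab: "a \<in> cyc_arc r i l" "b \<in> cyc_arc r j l'" "xs ! a = xs ! b"
    using assms(2) unfolding tail_arc_def by auto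
  have "a < r" "b < r" using ab cyc_arc_subset[OF r_pos] by auto
  hence "a = b" using inj_nth_ordering[OF xs] ab(3) by (auto dest: inj_onD)
  thus ?thesis using ab by auto
qed

definition long_vertex :: "nat list \<Rightarrow> nat \<Rightarrow> nat set" where
  "long_vertex xs i = tail_arc xs i q"
definition half_vertex1 :: "nat list \<Rightarrow> nat \<Rightarrow> nat set" where
  "half_vertex1 xs i = Head1 \<union> tail_arc xs i s"
definition half_vertex2 :: "nat list \<Rightarrow> nat \<Rightarrow> nat set" where
  "half_vertex2 xs i = Head2 \<union> tail_arc xs i s"

lemma long_vertex_sub: "xs \<in> orderings \<Longrightarrow> long_vertex xs i \<subseteq> Tail"
  unfolding long_vertex_def by (rule tail_arc_sub)

lemma vertices_in_V:
  assumes xs: "xs \<in> orderings"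
  shows "long_vertex xs i \<in> V" "half_vertex1 xs i \<in> V" "half_vertex2 xs i \<in> V" "Head \<in> V"
proof -
  have arc: "tail_arc xs i s \<subseteq> Tail" "card (tail_arc xs i s) = s" "finite (tail_arc xs i s)"
    using tail_arc_sub[OF xs] card_tail_arc[OF xs] q_eq q_le_r
    by (auto simp: tail_arc_def cyc_arc_def)
  have half: "H \<union> tail_arc xs i s \<in> V" if "H \<subseteq> Head" "card H = s" for H
  proof -
    have "H \<inter> tail_arc xs i s = {}" using that(1) arc(1) Tail_Head_disjoint by auto
    moreover have "finite H" using that(1) finite_subset unfolding Head_def by auto
    ultimately have "card (H \<union> tail_arc xs i s) = q"
      using card_Un_disjoint[of H "tail_arc xs i s"] arc(2,3) that(2) q_eq by simp
    moreover have "H \<union> tail_arc xs i s \<subseteq> {1..p}" using that(1) arc(1) Head_sub Tail_sub by auto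
    ultimately show ?thesis unfolding kneser_vertices_def by auto
  qed
  have "tail_arc xs i q \<subseteq> {1..p}" using tail_arc_sub[OF xs] Tail_sub by blast
  thus "long_vertex xs i \<in> V" unfolding kneser_vertices_def long_vertex_def
    using card_tail_arc[OF xs q_le_r] by auto
  show "half_vertex1 xs i \<in> V" unfolding half_vertex1_def by (rule half) (use Head1_sub card_Head_parts in auto)
  show "half_vertex2 xs i \<in> V" unfolding half_vertex2_def by (rule half) (use Head2_sub card_Head_parts in auto)
  show "Head \<in> V" unfolding kneser_vertices_def using Head_sub card_Head_parts by auto
qed

lemma head_part_arc_meet:
  assumes xs: "xs \<in> orderings" and H: "H \<inter> Tail = {}"
    and "(H \<union> tail_arc xs z s) \<inter> tail_arc xs j l \<noteq> {}"
  shows "cyc_arc r j l \<inter> cyc_arc r z s \<noteq> {}"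
proof -
  have "tail_arc xs z s \<inter> tail_arc xs j l \<noteq> {}" using assms tail_arc_sub[OF xs, of j l] by blast
  thus ?thesis using tail_arcs_meet[OF xs] by blast
qed

lemma half_vertices_meet:
  assumes xs: "xs \<in> orderings" and "half_vertex1 xs x \<inter> half_vertex2 xs y \<noteq> {}"
  shows "cyc_arc r x s \<inter> cyc_arc r y s \<noteq> {}"
proof -
  have "Head1 \<inter> Head2 = {}" "Head1 \<inter> Tail = {}" "Head2 \<inter> Tail = {}"
    using Tail_Head_disjoint Head1_sub Head2_sub unfolding Head1_def Head2_def by auto
  hence "tail_arc xs x s \<inter> tail_arc xs y s \<noteq> {}"
    using assms tail_arc_sub[OF xs, of x s] tail_arc_sub[OF xs, of y s]
    unfolding half_vertex1_def half_vertex2_def by blast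
  thus ?thesis using tail_arcs_meet[OF xs] by blast
qed

lemma half_vertices_distinct:
  assumes xs: "xs \<in> orderings"
  shows "half_vertex1 xs x \<noteq> half_vertex2 xs y"
proof -
  have "1 \<notin> tail_arc xs y s"
    using tail_arc_sub[OF xs] Tail_Head_disjoint one_in(1) Head1_sub by blast
  thus ?thesis using one_in unfolding half_vertex1_def half_vertex2_def by auto
qed

text \<open>The weight assigned by a single ordering: 1/r on each long vertex, c on each half
  vertex and d/q on the head; c is chosen so that the total weight is p/q.\<close>

definition c :: real where
  "c = real (q - d) / (real q * real r)"

definition ordering_weight :: "nat list \<Rightarrow> nat set \<Rightarrow> real" where
  "ordering_weight xs v =
  (\<Sum>i<r. (if long_vertex xs i = v then 1 / real r else 0)
     + (if half_vertex1 xs i = v then c else 0) + (if half_vertex2 xs i = v then c else 0))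
  + (if v = Head then real d / real q else 0)"

lemma ordering_weight_nonneg: "ordering_weight xs v \<ge> 0"
proof -
  have "c \<ge> 0" unfolding c_def by simp
  thus ?thesis unfolding ordering_weight_def by (intro add_nonneg_nonneg sum_nonneg) auto
qed

lemma sum_if_const:
  fixes a :: real
  assumes "finite A"
  shows "(\<Sum>x\<in>A. if P x then a else 0) = a * card {x\<in>A. P x}"
  using sum.inter_filter[OF assms, of "\<lambda>_. a" P] by (simp add: mult.commute)

lemma sum_ordering_weight:
  assumes "finite I"
  shows "(\<Sum>v\<in>I. ordering_weight xs v) = card {i\<in>{..<r}. long_vertex xs i \<in> I} / real r
     + c * card {i\<in>{..<r}. half_vertex1 xs i \<in> I} + c * card {i\<in>{..<r}. half_vertex2 xs i \<in> I}
     + (if Head \<in> I then real d / real q else 0)"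
proof -
  have "(\<Sum>v\<in>I. ordering_weight xs v) = (\<Sum>i<r. \<Sum>v\<in>I.
       (if long_vertex xs i = v then 1 / real r else 0)
     + (if half_vertex1 xs i = v then c else 0) + (if half_vertex2 xs i = v then c else 0))
     + (\<Sum>v\<in>I. if v = Head then real d / real q else 0)"
    unfolding ordering_weight_def by (simp add: sum.distrib sum.swap[of _ I])
  also have "\<dots> = (\<Sum>i<r. (if long_vertex xs i \<in> I then 1 / real r else 0)
     + (if half_vertex1 xs i \<in> I then c else 0) + (if half_vertex2 xs i \<in> I then c else 0))
     + (if Head \<in> I then real d / real q else 0)"
    using assms by (simp add: sum.distrib)
  finally show ?thesis by (simp add: sum.distrib sum_if_const)
qed

text \<open>For a single ordering, every independent set (a family of pairwise intersecting
  vertices) carries weight at most 1.  The positions of the supporting vertices in the family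
  form a configuration of arcs as in arc_configuration_bound; the head excludes all long
  vertices and then only the cross-intersection bound is needed.\<close>

lemma ordering_weight_clique:
  assumes xs: "xs \<in> orderings" and ind: "kneser_independent p q I"
  shows "(\<Sum>v\<in>I. ordering_weight xs v) \<le> 1"
proof -
  have meet: "\<And>S T. S \<in> I \<Longrightarrow> T \<in> I \<Longrightarrow> S \<noteq> T \<Longrightarrow> S \<inter> T \<noteq> {}"
    using ind unfolding kneser_independent_def kneser_adj_def by auto
  have finI: "finite I"
    using ind finite_subset[of I "Pow {1..p}"] unfolding kneser_independent_def kneser_vertices_def by auto
  define U where "U = {i\<in>{..<r}. long_vertex xs i \<in> I}"
  define X where "X = {i\<in>{..<r}. half_vertex1 xs i \<in> I}"
  define Y where "Y = {i\<in>{..<r}. half_vertex2 xs i \<in> I}"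
  have subs: "U \<subseteq> {..<r}" "X \<subseteq> {..<r}" "Y \<subseteq> {..<r}" unfolding U_def X_def Y_def by auto
  have cross: "\<forall>x\<in>X. \<forall>y\<in>Y. cyc_arc r x s \<inter> cyc_arc r y s \<noteq> {}"
  proof (intro ballI)
    fix x y assume "x \<in> X" "y \<in> Y"
    hence "half_vertex1 xs x \<in> I" "half_vertex2 xs y \<in> I" unfolding X_def Y_def by auto
    hence "half_vertex1 xs x \<inter> half_vertex2 xs y \<noteq> {}"
      using meet half_vertices_distinct[OF xs] by simp
    thus "cyc_arc r x s \<inter> cyc_arc r y s \<noteq> {}" by (rule half_vertices_meet[OF xs])
  qed
  have long: "\<forall>j\<in>U. \<forall>z\<in>X \<union> Y. cyc_arc r j (2 * s) \<inter> cyc_arc r z s \<noteq> {}"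
  proof (intro ballI)
    fix j z assume "j \<in> U" "z \<in> X \<union> Y"
    hence lj: "long_vertex xs j \<in> I" and
      "\<exists>H\<in>{Head1, Head2}. H \<union> tail_arc xs z s \<in> I"
      unfolding U_def X_def Y_def half_vertex1_def half_vertex2_def by auto
    then obtain H where H: "H \<in> {Head1, Head2}" "H \<union> tail_arc xs z s \<in> I" by blast
    have HT: "H \<inter> Tail = {}" "H \<noteq> {}"
      using H(1) Tail_Head_disjoint Head1_sub Head2_sub one_in(1) s1_in(1) by auto
    hence "H \<union> tail_arc xs z s \<noteq> long_vertex xs j" using long_vertex_sub[OF xs, of j] by blast
    hence "(H \<union> tail_arc xs z s) \<inter> tail_arc xs j q \<noteq> {}"
      using meet[OF H(2) lj] unfolding long_vertex_def by blast
    thus "cyc_arc r j (2 * s) \<inter> cyc_arc r z s \<noteq> {}"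
      using head_part_arc_meet[OF xs HT(1)] q_eq by metis
  qed
  have count: "q * card U + (q - d) * (card X + card Y) + (if Head \<in> I then d * r else 0) \<le> q * r"
  proof (cases "Head \<in> I")
    case True
    have "long_vertex xs j \<inter> Head = {}" "Head \<noteq> {}" for j
      using long_vertex_sub[OF xs, of j] Tail_Head_disjoint one_in(1) Head1_sub by auto
    hence "U = {}" using meet[OF _ True] unfolding U_def by fastforce
    have "card X + card Y \<le> r"
      using cross_intersecting_arcs_card[OF subs(2,3) _ cross] q_eq q_le_r by simp
    hence "(q - d) * (card X + card Y) \<le> (q - d) * r" by (rule mult_left_mono) simp
    moreover have "(q - d) * r + d * r = q * r"
      using q_eq d_le_s by (simp add: add_mult_distrib[symmetric])
    ultimately have "(q - d) * (card X + card Y) + d * r \<le> q * r" by linarith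
    thus ?thesis using True \<open>U = {}\<close> by simp
  next
    case False
    thus ?thesis using arc_configuration_bound[OF subs r_plus_d d_le_s cross long] q_eq by simp
  qed
  have "(\<Sum>v\<in>I. ordering_weight xs v)
      = real (q * card U + (q - d) * (card X + card Y) + (if Head \<in> I then d * r else 0))
        / (real q * real r)"
    unfolding sum_ordering_weight[OF finI] U_def[symmetric] X_def[symmetric] Y_def[symmetric] c_def
    using q_pos r_pos q_eq d_le_s by (simp add: field_simps of_nat_diff)
  also have "\<dots> \<le> 1" using count q_pos r_pos by (simp flip: of_nat_mult)
  finally show ?thesis .
qed

text \<open>Every ordering distributes total weight p/q: r long vertices of weight 1/r, 2r half
  vertices of weight c, and the head with weight d/q, where p + d = 3q.\<close>

lemma ordering_weight_total:
  assumes xs: "xs \<in> orderings"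
  shows "(\<Sum>v\<in>V. ordering_weight xs v) = real p / real q"
proof -
  have finV: "finite V" unfolding kneser_vertices_def by (rule finite_subset[of _ "Pow {1..p}"]) auto
  have all: "{i\<in>{..<r}. long_vertex xs i \<in> V} = {..<r}" "{i\<in>{..<r}. half_vertex1 xs i \<in> V} = {..<r}"
    "{i\<in>{..<r}. half_vertex2 xs i \<in> V} = {..<r}" using vertices_in_V[OF xs] by auto
  have "(\<Sum>v\<in>V. ordering_weight xs v) = 1 + 2 * c * r + real d / real q"
    unfolding sum_ordering_weight[OF finV] all using vertices_in_V(4)[OF xs] r_pos by simp
  also have "\<dots> = (3 * real q - real d) / real q"
    unfolding c_def using q_pos r_pos d_le_s q_eq by (simp add: field_simps of_nat_diff)
  also have "3 * real q - real d = real p"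
    using p_eq r_plus_d q_eq by (simp add: algebra_simps flip: of_nat_add of_nat_mult)
  finally show ?thesis .
qed

definition N :: "nat set set" where
  "N = {v\<in>V. kneser_adj v Head}"

lemma N_eq: "N = {B. B \<subseteq> Tail \<and> card B = q}"
proof -
  have "(B \<subseteq> {1..p} \<and> B \<inter> Head = {}) = (B \<subseteq> Tail)" for B
  proof
    assume h: "B \<subseteq> {1..p} \<and> B \<inter> Head = {}"
    show "B \<subseteq> Tail"
    proof
      fix x assume "x \<in> B"
      hence "x \<in> {1..p}" "x \<notin> {1..q}" using h unfolding Head_def by auto
      thus "x \<in> Tail" unfolding Tail_def by auto
    qed
  next
    assume "B \<subseteq> Tail"
    thus "B \<subseteq> {1..p} \<and> B \<inter> Head = {}" using Tail_sub Tail_Head_disjoint by blast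
  qed
  thus ?thesis unfolding N_def kneser_vertices_def kneser_adj_def by blast
qed

lemma finite_N: "finite N" unfolding N_eq Tail_def by simp

lemma card_N: "card N = r choose q"
  unfolding N_eq using n_subsets[of Tail q] card_Tail by (simp add: Tail_def)

lemma ordering_weight_N:
  assumes xs: "xs \<in> orderings"
  shows "(\<Sum>v\<in>N. ordering_weight xs v) = 1"
proof -
  have "long_vertex xs i \<in> N" for i
    using vertices_in_V(1)[OF xs] long_vertex_sub[OF xs] Tail_Head_disjoint
    unfolding N_def kneser_adj_def by auto
  hence a1: "{i\<in>{..<r}. long_vertex xs i \<in> N} = {..<r}" by auto
  have "1 \<in> Head" "s + 1 \<in> Head" using one_in s1_in Head1_sub Head2_sub by auto
  hence a2: "{i\<in>{..<r}. half_vertex1 xs i \<in> N} = {}" "{i\<in>{..<r}. half_vertex2 xs i \<in> N} = {}"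
    and a3: "Head \<notin> N"
    using one_in s1_in unfolding N_def kneser_adj_def half_vertex1_def half_vertex2_def by auto
  show ?thesis unfolding sum_ordering_weight[OF finite_N] a1 a2 using a3 r_pos by simp
qed

lemma tail_arc_permute:
  assumes xs: "xs \<in> orderings"
  shows "tail_arc (map \<pi> xs) i l = \<pi> ` tail_arc xs i l"
proof -
  have "map \<pi> xs ! k = \<pi> (xs ! k)" if "k \<in> cyc_arc r i l" for k
  proof -
    have "k < length xs" using that cyc_arc_subset[OF r_pos, of i l] length_ordering[OF xs] by auto
    thus ?thesis by simp
  qed
  thus ?thesis unfolding tail_arc_def by (auto simp: image_iff)
qed

lemma ordering_weight_permute:
  assumes \<pi>: "\<pi> permutes Tail" and xs: "xs \<in> orderings"
  shows "ordering_weight (map \<pi> xs) (\<pi> ` v) = ordering_weight xs v"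
proof -
  have inj: "inj \<pi>" using permutes_inj[OF \<pi>] .
  have fixes_head: "\<pi> ` H = H" if "H \<subseteq> Head" for H
  proof -
    have "H \<inter> Tail = {}" using that Tail_Head_disjoint by blast
    thus ?thesis by (rule permutes_image_outside[OF \<pi>])
  qed
  have moved: "long_vertex (map \<pi> xs) i = \<pi> ` long_vertex xs i"
    "half_vertex1 (map \<pi> xs) i = \<pi> ` half_vertex1 xs i"
    "half_vertex2 (map \<pi> xs) i = \<pi> ` half_vertex2 xs i" for i
    unfolding long_vertex_def half_vertex1_def half_vertex2_def tail_arc_permute[OF xs] image_Un
    using fixes_head Head1_sub Head2_sub by auto
  have "(\<pi> ` v = Head) = (\<pi> ` v = \<pi> ` Head)" using fixes_head by simp
  hence head: "(\<pi> ` v = Head) = (v = Head)" using inj_image_eq_iff[OF inj] by simp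
  show ?thesis unfolding ordering_weight_def moved inj_image_eq_iff[OF inj] head ..
qed

lemma orderings_permute:
  assumes \<pi>: "\<pi> permutes Tail"
  shows "bij_betw (map \<pi>) orderings orderings"
proof -
  have maps: "map \<pi> xs \<in> orderings" if "xs \<in> orderings" for xs
    using that permutes_image[OF \<pi>] permutes_inj_on[OF \<pi>]
    unfolding orderings_def by (auto simp: distinct_map)
  have inj: "inj_on (map \<pi>) orderings"
    using inj_mapI[OF permutes_inj[OF \<pi>]] by (rule inj_on_subset) simp
  moreover have "map \<pi> ` orderings \<subseteq> orderings" using maps by blast
  hence "map \<pi> ` orderings = orderings"
    using card_subset_eq[OF finite_orderings] card_image[OF inj] by metis
  ultimately show ?thesis unfolding bij_betw_def by blast
qed

definition avg_weight :: "nat set \<Rightarrow> real" where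
  "avg_weight v = (\<Sum>xs\<in>orderings. ordering_weight xs v) / real (card orderings)"

lemma sum_avg_weight:
  "finite I \<Longrightarrow> (\<Sum>v\<in>I. avg_weight v) = (\<Sum>xs\<in>orderings. \<Sum>v\<in>I. ordering_weight xs v) / real (card orderings)"
  unfolding avg_weight_def by (simp add: sum_divide_distrib[symmetric] sum.swap[of _ I])

lemma avg_weight_permute:
  assumes \<pi>: "\<pi> permutes Tail"
  shows "avg_weight (\<pi> ` v) = avg_weight v"
proof -
  have "(\<Sum>xs\<in>orderings. ordering_weight xs (\<pi> ` v))
      = (\<Sum>xs\<in>orderings. ordering_weight (map \<pi> xs) (\<pi> ` v))"
    by (rule sum.reindex_bij_betw[OF orderings_permute[OF \<pi>], symmetric])
  also have "\<dots> = (\<Sum>xs\<in>orderings. ordering_weight xs v)"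
    using ordering_weight_permute[OF \<pi>] by simp
  finally show ?thesis unfolding avg_weight_def by simp
qed

text \<open>By symmetry all neighbours of the head receive the same average weight, and since
  they carry total weight 1 it equals 1 / (r choose q).\<close>

lemma avg_weight_N:
  assumes v: "v \<in> N"
  shows "avg_weight v = 1 / real (r choose q)"
proof -
  have vT: "v \<subseteq> Tail" "card v = q" using v N_eq by auto
  have const: "avg_weight w = avg_weight v" if "w \<in> N" for w
  proof -
    have "w \<subseteq> Tail" "card w = q" using that N_eq by auto
    moreover have "finite Tail" unfolding Tail_def by simp
    ultimately obtain \<pi> where "\<pi> permutes Tail" "\<pi> ` v = w"
      using exists_permutation_mapping[of Tail v w] vT by auto
    thus ?thesis using avg_weight_permute[of \<pi> v] by simp
  qed
  have "(\<Sum>w\<in>N. avg_weight w) = 1"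
    unfolding sum_avg_weight[OF finite_N] using ordering_weight_N card_orderings_pos by simp
  moreover have "(\<Sum>w\<in>N. avg_weight w) = (\<Sum>w\<in>N. avg_weight v)" using const by simp
  ultimately have "real (card N) * avg_weight v = 1" by simp
  moreover have "r choose q > 0" using q_le_r by simp
  ultimately show ?thesis unfolding card_N by (simp add: field_simps)
qed

lemma avg_weight_clique: "kneser_independent p q I \<Longrightarrow> (\<Sum>v\<in>I. avg_weight v) \<le> 1"
proof -
  assume ind: "kneser_independent p q I"
  hence finI: "finite I"
    using finite_subset[of I "Pow {1..p}"] unfolding kneser_independent_def kneser_vertices_def by auto
  have "(\<Sum>xs\<in>orderings. \<Sum>v\<in>I. ordering_weight xs v) \<le> (\<Sum>xs\<in>orderings. 1)"
    by (rule sum_mono) (rule ordering_weight_clique[OF _ ind])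
  thus ?thesis unfolding sum_avg_weight[OF finI] using card_orderings_pos by (simp add: divide_le_eq)
qed

lemma avg_weight_total: "fc_weight p q avg_weight = real p / real q"
proof -
  have finV: "finite V" unfolding kneser_vertices_def by (rule finite_subset[of _ "Pow {1..p}"]) auto
  show ?thesis unfolding fc_weight_def sum_avg_weight[OF finV]
    using ordering_weight_total card_orderings_pos by simp
qed

lemma avg_weight_fractional_clique: "kneser_fractional_clique p q avg_weight"
  unfolding kneser_fractional_clique_def
proof (intro conjI ballI allI impI)
  fix v assume v: "v \<in> V"
  show "0 \<le> avg_weight v"
    unfolding avg_weight_def using ordering_weight_nonneg by (simp add: sum_nonneg)
  have "kneser_independent p q {v}" using v unfolding kneser_independent_def by auto
  from avg_weight_clique[OF this] show "avg_weight v \<le> 1" by simp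
qed (rule avg_weight_clique)

end

theorem mainTheorem13:
  fixes p q :: nat
  assumes "p > 0" and "q > 0" and "even q"
    and "5 / 2 \<le> real p / real q" and "real p / real q < 3"
  shows "\<exists>x. kneser_fractional_clique p q x \<and>
           fc_weight p q x = real p / real q \<and>
           (\<forall>v\<in>kneser_vertices p q. kneser_adj v {1..q} \<longrightarrow>
               x v = 1 / real ((p - q) choose q))"
proof -
  have "5 * real q \<le> 2 * real p" "real p < 3 * real q"
    using assms(2,4,5) by (simp_all add: field_simps)
  hence "5 * q \<le> 2 * p" "p < 3 * q" by linarith+
  then interpret kneser_window p q using assms(2,3) by unfold_locales
  have "avg_weight v = 1 / real ((p - q) choose q)"
    if "v \<in> kneser_vertices p q" "kneser_adj v {1..q}" for v
    using avg_weight_N[of v] that unfolding N_def Head_def r_def by simp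
  thus ?thesis using avg_weight_fractional_clique avg_weight_total by (intro exI[of _ avg_weight]) simp
qed
end
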